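(* For every $n\ge1$ and $0\le m<n$, $S_{n,m}(0010,0021)=S_{n,m}(0011,0021)$.
   Context: An ascent in a sequence is an index $j$ with $x_j<x_{j+1}$; $\mathrm{asc}$ counts ascents. An ascent sequence of length $n$ is a sequence $x_1\cdots x_n$ of non-negative integers with $x_1=0$ and $x_i\le \mathrm{asc}(x_1\cdots x_{i-1})+1$ for $1<i\le n$. A sequence contains a pattern $\tau$ (a sequence of non-negative integers) if some subsequence is order-isomorphic to $\tau$ (same relative order, equal letters to equal letters); otherwise it avoids $\tau$. $S_{n,m}(T)$ is the number of ascent sequences of length $n$ with exactly $m$ ascents avoiding all patterns in $T$. *)

theory Defs
  imports Main
begin

definition asc :: "nat list \<Rightarrow> nat" where
  "asc xs = card {j. Suc j < length xs \<and> xs ! j < xs ! Suc j}"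

definition ascent_seq :: "nat list \<Rightarrow> bool" where
  "ascent_seq xs \<longleftrightarrow> xs \<noteq> [] \<and> xs ! 0 = 0 \<and>
     (\<forall>i. 0 < i \<and> i < length xs \<longrightarrow> xs ! i \<le> asc (take i xs) + 1)"

definition contains :: "nat list \<Rightarrow> nat list \<Rightarrow> bool" where
  "contains xs p \<longleftrightarrow> (\<exists>f :: nat \<Rightarrow> nat.
     strict_mono_on {..<length p} f \<and> (\<forall>a<length p. f a < length xs) \<and>
     (\<forall>a<length p. \<forall>b<length p.
        (xs ! f a < xs ! f b \<longleftrightarrow> p ! a < p ! b) \<and>
        (xs ! f a = xs ! f b \<longleftrightarrow> p ! a = p ! b)))"

definition avoids :: "nat list \<Rightarrow> nat list \<Rightarrow> bool" where
  "avoids xs p \<longleftrightarrow> \<not> contains xs p"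

definition S :: "nat \<Rightarrow> nat \<Rightarrow> nat list set \<Rightarrow> nat" where
  "S n m T = card {xs. ascent_seq xs \<and> length xs = n \<and> asc xs = m \<and>
                      (\<forall>p\<in>T. avoids xs p)}"

end

theory Submission
  imports Defs
begin

(* Avoiding {0010, 0021} means there are no positions i < j < k < l with
   x_i = x_j <= x_l < x_k; avoiding {0011, 0021} means there are none with
   x_i = x_j < x_l <= x_k.  The proof is a bijection between the two classes.  The
   demotion map replaces every entry x_l by the least of x_l and all values occurring
   twice before some earlier occurrence of the value x_l.  On sequences avoiding
   {0010, 0021} this map
     (1) keeps every ascent and every non-ascent in place, so it preserves the ascent
         statistic and the property of being an ascent sequence (in both directions),
     (2) produces a sequence avoiding {0011, 0021},
     (3) is injective, and
     (4) reaches every sequence avoiding {0011, 0021}; a preimage is built one entry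
         at a time. *)

section \<open>Occurrences of the two pattern pairs\<close>

lemma all_less_four: "(\<forall>a<(4::nat). P a) \<longleftrightarrow> P 0 \<and> P 1 \<and> P 2 \<and> P 3"
  by (auto simp: less_Suc_eq numeral_eq_Suc)

lemma contains_length_four:
  assumes "length p = 4"
  shows "contains xs p \<longleftrightarrow> (\<exists>i j k l. i < j \<and> j < k \<and> k < l \<and> l < length xs \<and>
     (\<forall>a<4. \<forall>b<4. (xs ! ([i,j,k,l] ! a) < xs ! ([i,j,k,l] ! b) \<longleftrightarrow> p ! a < p ! b) \<and>
        (xs ! ([i,j,k,l] ! a) = xs ! ([i,j,k,l] ! b) \<longleftrightarrow> p ! a = p ! b)))"
    (is "_ \<longleftrightarrow> (\<exists>i j k l. ?occ i j k l)")
proof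
  assume "contains xs p"
  then obtain f where f: "strict_mono_on {..<length p} f" "\<forall>a<length p. f a < length xs"
    "\<forall>a<length p. \<forall>b<length p.
       (xs ! f a < xs ! f b \<longleftrightarrow> p ! a < p ! b) \<and> (xs ! f a = xs ! f b \<longleftrightarrow> p ! a = p ! b)"
    unfolding contains_def by blast
  have positions: "\<And>a. a < 4 \<Longrightarrow> [f 0, f 1, f 2, f 3] ! a = f a"
    by (auto simp: less_Suc_eq numeral_eq_Suc)
  have "f 0 < f 1" "f 1 < f 2" "f 2 < f 3"
    using f(1) assms by (auto simp: strict_mono_on_def)
  moreover have "f 3 < length xs"
    using f(2) assms by auto
  ultimately show "\<exists>i j k l. ?occ i j k l"
    using f(3) assms positions
    by (intro exI[of _ "f 0"] exI[of _ "f 1"] exI[of _ "f 2"] exI[of _ "f 3"]) simp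
next
  assume "\<exists>i j k l. ?occ i j k l"
  then obtain i j k l where ord: "i < j" "j < k" "k < l" "l < length xs"
    and iso: "\<forall>a<4. \<forall>b<4. (xs ! ([i,j,k,l] ! a) < xs ! ([i,j,k,l] ! b) \<longleftrightarrow> p ! a < p ! b) \<and>
        (xs ! ([i,j,k,l] ! a) = xs ! ([i,j,k,l] ! b) \<longleftrightarrow> p ! a = p ! b)"
    by blast
  show "contains xs p" unfolding contains_def
  proof (intro exI[of _ "\<lambda>a. [i,j,k,l] ! a"] conjI)
    show "strict_mono_on {..<length p} (\<lambda>a. [i,j,k,l] ! a)"
      using ord assms by (auto simp: strict_mono_on_def less_Suc_eq numeral_eq_Suc)
    show "\<forall>a<length p. [i,j,k,l] ! a < length xs"
      using ord assms by (auto simp: less_Suc_eq numeral_eq_Suc)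
  qed (use iso assms in auto)
qed

lemma contains_0010:
  "contains xs [0,0,1,0] \<longleftrightarrow> (\<exists>i j k l. i < j \<and> j < k \<and> k < l \<and> l < length xs \<and>
     xs ! i = xs ! j \<and> xs ! i < xs ! k \<and> xs ! l = xs ! i)"
proof -
  have iso: "(\<forall>a<4. \<forall>b<4.
      (xs ! ([i,j,k,l] ! a) < xs ! ([i,j,k,l] ! b) \<longleftrightarrow> [0,0,1,0] ! a < ([0,0,1,0] :: nat list) ! b) \<and>
      (xs ! ([i,j,k,l] ! a) = xs ! ([i,j,k,l] ! b) \<longleftrightarrow> [0,0,1,0] ! a = ([0,0,1,0] :: nat list) ! b))
    \<longleftrightarrow> xs ! i = xs ! j \<and> xs ! i < xs ! k \<and> xs ! l = xs ! i" for i j k l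
    by (simp add: all_less_four) (intro iffI; elim conjE; intro conjI; linarith)
  show ?thesis
    by (subst contains_length_four) (simp, simp only: iso)
qed

lemma contains_0011:
  "contains xs [0,0,1,1] \<longleftrightarrow> (\<exists>i j k l. i < j \<and> j < k \<and> k < l \<and> l < length xs \<and>
     xs ! i = xs ! j \<and> xs ! i < xs ! k \<and> xs ! l = xs ! k)"
proof -
  have iso: "(\<forall>a<4. \<forall>b<4.
      (xs ! ([i,j,k,l] ! a) < xs ! ([i,j,k,l] ! b) \<longleftrightarrow> [0,0,1,1] ! a < ([0,0,1,1] :: nat list) ! b) \<and>
      (xs ! ([i,j,k,l] ! a) = xs ! ([i,j,k,l] ! b) \<longleftrightarrow> [0,0,1,1] ! a = ([0,0,1,1] :: nat list) ! b))
    \<longleftrightarrow> xs ! i = xs ! j \<and> xs ! i < xs ! k \<and> xs ! l = xs ! k" for i j k l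
    by (simp add: all_less_four) (intro iffI; elim conjE; intro conjI; linarith)
  show ?thesis
    by (subst contains_length_four) (simp, simp only: iso)
qed

lemma contains_0021:
  "contains xs [0,0,2,1] \<longleftrightarrow> (\<exists>i j k l. i < j \<and> j < k \<and> k < l \<and> l < length xs \<and>
     xs ! i = xs ! j \<and> xs ! i < xs ! l \<and> xs ! l < xs ! k)"
proof -
  have iso: "(\<forall>a<4. \<forall>b<4.
      (xs ! ([i,j,k,l] ! a) < xs ! ([i,j,k,l] ! b) \<longleftrightarrow> [0,0,2,1] ! a < ([0,0,2,1] :: nat list) ! b) \<and>
      (xs ! ([i,j,k,l] ! a) = xs ! ([i,j,k,l] ! b) \<longleftrightarrow> [0,0,2,1] ! a = ([0,0,2,1] :: nat list) ! b))
    \<longleftrightarrow> xs ! i = xs ! j \<and> xs ! i < xs ! l \<and> xs ! l < xs ! k" for i j k l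
    by (simp add: all_less_four) (intro iffI; elim conjE; intro conjI; linarith)
  show ?thesis
    by (subst contains_length_four) (simp, simp only: iso)
qed

definition no_0010_0021 :: "nat list \<Rightarrow> bool" where
  "no_0010_0021 x \<longleftrightarrow> \<not> (\<exists>i j k l. i < j \<and> j < k \<and> k < l \<and> l < length x \<and>
      x ! i = x ! j \<and> x ! i \<le> x ! l \<and> x ! l < x ! k)"

definition no_0011_0021 :: "nat list \<Rightarrow> bool" where
  "no_0011_0021 x \<longleftrightarrow> \<not> (\<exists>i j k l. i < j \<and> j < k \<and> k < l \<and> l < length x \<and>
      x ! i = x ! j \<and> x ! i < x ! l \<and> x ! l \<le> x ! k)"

lemma avoids_0010_0021_iff:
  "(\<forall>p\<in>{[0,0,1,0], [0,0,2,1]}. avoids xs p) \<longleftrightarrow> no_0010_0021 xs"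
proof -
  have split: "(xs ! i = xs ! j \<and> xs ! i \<le> xs ! l \<and> xs ! l < xs ! k) \<longleftrightarrow>
      (xs ! i = xs ! j \<and> xs ! i < xs ! k \<and> xs ! l = xs ! i) \<or>
      (xs ! i = xs ! j \<and> xs ! i < xs ! l \<and> xs ! l < xs ! k)" for i j k l
    by auto
  have reduce: "(\<forall>p\<in>{[0,0,1,0], [0,0,2,1]}. avoids xs p) \<longleftrightarrow>
      \<not> contains xs [0,0,1,0] \<and> \<not> contains xs [0,0,2,1]"
    unfolding avoids_def by blast
  show ?thesis
    unfolding reduce no_0010_0021_def contains_0010 contains_0021
    by (simp only: split conj_disj_distribL ex_disj_distrib) simp
qed

lemma avoids_0011_0021_iff:
  "(\<forall>p\<in>{[0,0,1,1], [0,0,2,1]}. avoids xs p) \<longleftrightarrow> no_0011_0021 xs"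
proof -
  have split: "(xs ! i = xs ! j \<and> xs ! i < xs ! l \<and> xs ! l \<le> xs ! k) \<longleftrightarrow>
      (xs ! i = xs ! j \<and> xs ! i < xs ! k \<and> xs ! l = xs ! k) \<or>
      (xs ! i = xs ! j \<and> xs ! i < xs ! l \<and> xs ! l < xs ! k)" for i j k l
    by auto
  have reduce: "(\<forall>p\<in>{[0,0,1,1], [0,0,2,1]}. avoids xs p) \<longleftrightarrow>
      \<not> contains xs [0,0,1,1] \<and> \<not> contains xs [0,0,2,1]"
    unfolding avoids_def by blast
  show ?thesis
    unfolding reduce no_0011_0021_def contains_0011 contains_0021
    by (simp only: split conj_disj_distribL ex_disj_distrib) simp
qed

lemma no_0010_0021D:
  assumes "no_0010_0021 x" "i < j" "j < k" "k < l" "l < length x" "x ! i = x ! j" "x ! i \<le> x ! l"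
  shows "x ! k \<le> x ! l"
  using assms unfolding no_0010_0021_def by (meson not_le)

section \<open>The demotion map\<close>

definition shadow :: "nat list \<Rightarrow> nat \<Rightarrow> nat set" where
  "shadow x l = {x ! i | i. \<exists>j k. i < j \<and> j < k \<and> k < l \<and> x ! i = x ! j \<and> x ! k = x ! l}"

definition demote :: "nat list \<Rightarrow> nat \<Rightarrow> nat" where
  "demote x l = Min (insert (x ! l) (shadow x l))"

definition demote_seq :: "nat list \<Rightarrow> nat list" where
  "demote_seq x = map (demote x) [0..<length x]"

lemma finite_shadow: "finite (shadow x l)"
proof (rule finite_subset)
  show "shadow x l \<subseteq> (\<lambda>i. x ! i) ` {..<l}"
    unfolding shadow_def by auto
qed simp

lemma demote_le: "demote x l \<le> x ! l"
  unfolding demote_def by (simp add: finite_shadow)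

lemma demote_le_shadow:
  assumes "i < j" "j < k" "k < l" "x ! i = x ! j" "x ! k = x ! l"
  shows "demote x l \<le> x ! i"
proof -
  have "x ! i \<in> shadow x l"
    unfolding shadow_def using assms by blast
  then show ?thesis
    unfolding demote_def by (simp add: finite_shadow)
qed

lemma demote_witness:
  assumes "demote x l < x ! l"
  obtains i j k where "i < j" "j < k" "k < l" "x ! i = x ! j" "x ! k = x ! l" "x ! i = demote x l"
proof -
  have "demote x l \<in> insert (x ! l) (shadow x l)"
    unfolding demote_def by (rule Min_in) (simp_all add: finite_shadow)
  with assms have "demote x l \<in> shadow x l" by auto
  then show ?thesis
    using that unfolding shadow_def by auto
qed

lemma demote_0: "demote x 0 = x ! 0"
  unfolding demote_def shadow_def by simp

lemma shadow_mono_prefix: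
  assumes "\<And>i. i \<le> l \<Longrightarrow> x ! i = x' ! i"
  shows "shadow x l \<subseteq> shadow x' l"
proof
  fix v assume "v \<in> shadow x l"
  then obtain i j k where ijk: "i < j" "j < k" "k < l" "x ! i = x ! j" "x ! k = x ! l" and v: "v = x ! i"
    unfolding shadow_def by blast
  have "x' ! i = x' ! j" "x' ! k = x' ! l" "v = x' ! i"
    using ijk v assms[of i] assms[of j] assms[of k] assms[of l] by simp_all
  with ijk show "v \<in> shadow x' l"
    unfolding shadow_def by blast
qed

lemma demote_cong:
  assumes "\<And>i. i \<le> l \<Longrightarrow> x ! i = x' ! i"
  shows "demote x l = demote x' l"
proof -
  have "shadow x l = shadow x' l"
    using shadow_mono_prefix[of l x x'] shadow_mono_prefix[of l x' x] assms by (metis subset_antisym)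
  then show ?thesis
    unfolding demote_def using assms[of l] by simp
qed

lemma length_demote_seq [simp]: "length (demote_seq x) = length x"
  unfolding demote_seq_def by simp

lemma nth_demote_seq [simp]: "l < length x \<Longrightarrow> demote_seq x ! l = demote x l"
  unfolding demote_seq_def by simp

lemma demote_seq_snoc: "demote_seq (x @ [b]) = demote_seq x @ [demote (x @ [b]) (length x)]"
proof (rule nth_equalityI)
  fix l assume "l < length (demote_seq (x @ [b]))"
  then consider "l < length x" | "l = length x" by fastforce
  then show "demote_seq (x @ [b]) ! l = (demote_seq x @ [demote (x @ [b]) (length x)]) ! l"
  proof cases
    case 1
    then have "demote (x @ [b]) l = demote x l"
      by (intro demote_cong) (simp add: nth_append)
    with 1 show ?thesis by (simp add: nth_append)
  qed (simp add: nth_append)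
qed simp

section \<open>Demotion preserves ascents\<close>

text \<open>Under avoidance of {0010, 0021}, an ascent stays an ascent: a demoted value of
  x_(l+1) comes from a repeat before an earlier copy of x_(l+1), which must lie above x_l.\<close>

lemma demote_ascent_up:
  assumes A: "no_0010_0021 x" and l: "Suc l < length x" and up: "x ! l < x ! Suc l"
  shows "demote x l < demote x (Suc l)"
proof (cases "demote x (Suc l) < x ! Suc l")
  case True
  then obtain i j k where ijk: "i < j" "j < k" "k < Suc l" "x ! i = x ! j"
    and same: "x ! k = x ! Suc l" and val: "x ! i = demote x (Suc l)"
    by (rule demote_witness)
  have "k < l"
    using ijk(3) same up by (cases "k = l") auto
  then have "\<not> x ! i \<le> x ! l"
    using no_0010_0021D[OF A ijk(1,2) _ _ ijk(4)] l same up by fastforce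
  then show ?thesis
    using demote_le[of x l] val by linarith
next
  case False
  then show ?thesis
    using demote_le[of x l] up by linarith
qed

text \<open>Dually, a weak descent stays a weak descent: a repeat witnessing the demotion of x_l
  also lies below x_(l+1), either directly (equal entries) or by pattern avoidance.\<close>

lemma demote_ascent_down:
  assumes A: "no_0010_0021 x" and l: "Suc l < length x" and down: "x ! Suc l \<le> x ! l"
  shows "demote x (Suc l) \<le> demote x l"
proof (cases "demote x l < x ! l")
  case True
  then obtain i j k where ijk: "i < j" "j < k" "k < l" "x ! i = x ! j"
    and same: "x ! k = x ! l" and val: "x ! i = demote x l"
    by (rule demote_witness)
  show ?thesis
  proof (cases "x ! Suc l = x ! l")
    case True
    then show ?thesis
      using demote_le_shadow[of i j k "Suc l" x] ijk same val by simp
  next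
    case False
    then have "\<not> x ! k \<le> x ! Suc l"
      using down same by simp
    then have "\<not> x ! i \<le> x ! Suc l"
      using no_0010_0021D[OF A ijk(1,2) _ l ijk(4)] ijk(3) by fastforce
    then show ?thesis
      using val demote_le[of x "Suc l"] by simp
  qed
next
  case False
  then show ?thesis
    using down demote_le[of x l] demote_le[of x "Suc l"] by simp
qed

lemma demote_ascent:
  assumes "no_0010_0021 x" and "Suc l < length x"
  shows "x ! l < x ! Suc l \<longleftrightarrow> demote x l < demote x (Suc l)"
  using demote_ascent_up[OF assms] demote_ascent_down[OF assms] by fastforce

lemma asc_take_demote_seq:
  assumes "no_0010_0021 x"
  shows "asc (take i (demote_seq x)) = asc (take i x)"
proof -
  have "(Suc j < length (take i (demote_seq x)) \<and> take i (demote_seq x) ! j < take i (demote_seq x) ! Suc j)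
      \<longleftrightarrow> (Suc j < length (take i x) \<and> take i x ! j < take i x ! Suc j)" for j
    using demote_ascent[OF assms, of j] by auto
  then show ?thesis
    unfolding asc_def by simp
qed

lemma asc_take_mono:
  assumes "k \<le> i"
  shows "asc (take k xs) \<le> asc (take i xs)"
  unfolding asc_def
proof (rule card_mono)
  show "finite {j. Suc j < length (take i xs) \<and> take i xs ! j < take i xs ! Suc j}"
    by (rule finite_subset[of _ "{..<length (take i xs)}"]) auto
  show "{j. Suc j < length (take k xs) \<and> take k xs ! j < take k xs ! Suc j}
      \<subseteq> {j. Suc j < length (take i xs) \<and> take i xs ! j < take i xs ! Suc j}"
    using assms by auto
qed

section \<open>The demoted sequence avoids {0011, 0021}\<close>

lemma repeat_of_demote_seq:
  assumes "i < j" "demote x i = demote x j"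
  obtains i' j' where "i' < j'" "j' \<le> j" "x ! i' = x ! j'" "x ! i' \<le> demote x i"
proof (cases "demote x i < x ! i")
  case True
  then obtain i' j' k where "i' < j'" "j' < k" "k < i" "x ! i' = x ! j'" "x ! i' = demote x i"
    by (rule demote_witness)
  then show ?thesis
    using that assms(1) by simp
next
  case fixed_i: False
  show ?thesis
  proof (cases "demote x j < x ! j")
    case True
    then obtain i' j' k where "i' < j'" "j' < k" "k < j" "x ! i' = x ! j'" "x ! i' = demote x j"
      by (rule demote_witness)
    then show ?thesis
      using that assms(2) by simp
  next
    case False
    then show ?thesis
      using that[of i j] assms fixed_i demote_le[of x i] demote_le[of x j] by simp
  qed
qed

lemma demote_no_split:
  assumes A: "no_0010_0021 x"
    and ord: "i < j" "j < k" "k < l" "l < length x" and rep: "x ! i = x ! j"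
    and low: "x ! i < demote x l" and high: "demote x l \<le> demote x k"
  shows False
proof -
  have "x ! k \<noteq> x ! l"
    using demote_le_shadow[OF ord(1-3) rep] low by fastforce
  moreover have "x ! k \<le> x ! l"
    using no_0010_0021D[OF A ord rep] low demote_le[of x l] by simp
  ultimately have k_below: "x ! k < x ! l" by simp
  then have "demote x l < x ! l"
    using high demote_le[of x k] by simp
  then obtain i2 j2 k2 where ijk2: "i2 < j2" "j2 < k2" "k2 < l" "x ! i2 = x ! j2"
    and same: "x ! k2 = x ! l" and val: "x ! i2 = demote x l"
    by (rule demote_witness)
  consider "k2 < k" | "k2 = k" | "k < k2" by linarith
  then show False
  proof cases
    case 1
    have "x ! i2 \<le> x ! k"
      using val high demote_le[of x k] by simp
    then have "x ! k2 \<le> x ! k"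
      using no_0010_0021D[OF A ijk2(1,2) 1 _ ijk2(4)] ord by simp
    then show False using same k_below by simp
  next
    case 2
    then show False using same k_below by simp
  next
    case 3
    have "demote x l \<le> x ! i"
      using demote_le_shadow[OF ord(1) _ ijk2(3) rep same] ord 3 by simp
    then show False using low by simp
  qed
qed

lemma no_0011_0021_demote_seq:
  assumes A: "no_0010_0021 x"
  shows "no_0011_0021 (demote_seq x)"
  unfolding no_0011_0021_def
proof (rule notI, elim exE conjE)
  fix i j k l
  let ?y = "demote_seq x"
  assume ord: "i < j" "j < k" "k < l" "l < length ?y"
    and pat: "?y ! i = ?y ! j" "?y ! i < ?y ! l" "?y ! l \<le> ?y ! k"
  have l: "l < length x" using ord by simp
  then have rep: "demote x i = demote x j" and up: "demote x i < demote x l"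
    and down: "demote x l \<le> demote x k"
    using pat ord by simp_all
  obtain i' j' where "i' < j'" "j' \<le> j" "x ! i' = x ! j'" "x ! i' \<le> demote x i"
    using ord(1) rep by (rule repeat_of_demote_seq)
  then show False
    using demote_no_split[OF A, of i' j' k l] ord(2,3) l up down by simp
qed

section \<open>Injectivity\<close>

text \<open>Applied in both directions it recovers x_l from the
  demoted entry and the prefix.\<close>

lemma entry_bound_from_demote:
  assumes A: "no_0010_0021 x" and l: "l < length x"
    and agree: "\<And>i. i < l \<Longrightarrow> x ! i = x' ! i" and below: "demote x' l \<le> x ! l"
  shows "x' ! l \<le> x ! l"
proof (cases "demote x' l < x' ! l")
  case True
  then obtain i j k where ijk: "i < j" "j < k" "k < l" "x' ! i = x' ! j"
    and same: "x' ! k = x' ! l" and val: "x' ! i = demote x' l"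
    by (rule demote_witness)
  have "x ! i = x ! j" "x ! i \<le> x ! l" "x ! k = x' ! l"
    using ijk same val below agree[of i] agree[of j] agree[of k] by simp_all
  then show ?thesis
    using no_0010_0021D[OF A ijk(1-3) l] by simp
next
  case False
  then show ?thesis
    using below demote_le[of x' l] by simp
qed

lemma demote_seq_inj:
  assumes A: "no_0010_0021 x" and A': "no_0010_0021 x'"
    and len: "length x = length x'" and eq: "demote_seq x = demote_seq x'"
  shows "x = x'"
proof (rule nth_equalityI[OF len])
  fix l assume "l < length x"
  then show "x ! l = x' ! l"
  proof (induction l rule: less_induct)
    case (less l)
    have agree: "\<And>i. i < l \<Longrightarrow> x ! i = x' ! i"
      using less by simp
    have dem: "demote x l = demote x' l"
      using arg_cong[OF eq, of "\<lambda>y. y ! l"] less.prems len by simp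
    have "x' ! l \<le> x ! l"
      using entry_bound_from_demote[OF A less.prems agree] dem demote_le[of x l] by simp
    moreover have "x ! l \<le> x' ! l"
      using entry_bound_from_demote[OF A', of l x] less.prems len agree dem demote_le[of x' l] by simp
    ultimately show ?case by simp
  qed
qed

section \<open>Surjectivity\<close>

lemma no_0011_0021_prefix:
  assumes "no_0011_0021 (y @ z)"
  shows "no_0011_0021 y"
  unfolding no_0011_0021_def
proof (rule notI, elim exE conjE)
  fix i j k l
  assume ord: "i < j" "j < k" "k < l" "l < length y"
    and pat: "y ! i = y ! j" "y ! i < y ! l" "y ! l \<le> y ! k"
  have "\<exists>i j k l. i < j \<and> j < k \<and> k < l \<and> l < length (y @ z) \<and> (y @ z) ! i = (y @ z) ! j \<and>
      (y @ z) ! i < (y @ z) ! l \<and> (y @ z) ! l \<le> (y @ z) ! k"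
    by (intro exI[of _ i] exI[of _ j] exI[of _ k] exI[of _ l]) (use ord pat in \<open>simp add: nth_append\<close>)
  then show False
    using assms unfolding no_0011_0021_def by blast
qed

lemma no_0011_0021_snocD:
  assumes B: "no_0011_0021 (demote_seq x @ [a])"
    and ord: "i < j" "j < k" "k < length x"
    and rep: "demote x i = demote x j" and low: "demote x i < a"
  shows "demote x k < a"
proof (rule ccontr)
  let ?z = "demote_seq x @ [a]"
  assume "\<not> demote x k < a"
  then have "i < j \<and> j < k \<and> k < length x \<and> length x < length ?z \<and> ?z ! i = ?z ! j \<and>
      ?z ! i < ?z ! length x \<and> ?z ! length x \<le> ?z ! k"
    using ord rep low by (simp add: nth_append)
  then show False
    using B unfolding no_0011_0021_def by blast
qed

lemma repeat_survives_demotion: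
  "i < j \<Longrightarrow> j < p \<Longrightarrow> x ! i = x ! j \<Longrightarrow>
    \<exists>i' j'. i' < j' \<and> j' < p \<and> demote x i' = demote x j' \<and> demote x i' \<le> x ! i"
proof (induction "x ! i" arbitrary: i j rule: less_induct)
  case less
  show ?case
  proof (cases "demote x i < x ! i")
    case True
    then obtain i1 j1 k1 where "i1 < j1" "j1 < k1" "k1 < i" "x ! i1 = x ! j1" "x ! i1 = demote x i"
      by (rule demote_witness)
    then show ?thesis
      using less.hyps[of i1 j1] True less.prems by fastforce
  next
    case fixed_i: False
    show ?thesis
    proof (cases "demote x j < x ! j")
      case True
      then obtain i1 j1 k1 where "i1 < j1" "j1 < k1" "k1 < j" "x ! i1 = x ! j1" "x ! i1 = demote x j"
        by (rule demote_witness)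
      then show ?thesis
        using less.hyps[of i1 j1] True less.prems by fastforce
    next
      case False
      then show ?thesis
        using fixed_i less.prems demote_le[of x i] demote_le[of x j] by (intro exI[of _ i] exI[of _ j]) simp
    qed
  qed
qed

lemma below_threshold:
  assumes B: "no_0011_0021 (demote_seq x @ [a])"
  shows "p < length x \<Longrightarrow> i < j \<Longrightarrow> j < p \<Longrightarrow> x ! i = x ! j \<Longrightarrow> x ! i < a \<Longrightarrow> x ! p < a"
proof (induction p arbitrary: i j rule: less_induct)
  case (less p)
  obtain i' j' where "i' < j'" "j' < p" "demote x i' = demote x j'" "demote x i' \<le> x ! i"
    using repeat_survives_demotion[OF less.prems(2-4)] by blast
  then have demoted_low: "demote x p < a"
    using no_0011_0021_snocD[OF B, of i' j' p] less.prems by simp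
  show ?case
  proof (cases "demote x p < x ! p")
    case True
    then obtain i1 j1 k1 where ijk1: "i1 < j1" "j1 < k1" "k1 < p" "x ! i1 = x ! j1"
      and "x ! k1 = x ! p" "x ! i1 = demote x p"
      by (rule demote_witness)
    then show ?thesis
      using less.IH[OF ijk1(3) _ ijk1(1,2,4)] less.prems demoted_low by simp
  next
    case False
    then show ?thesis
      using demoted_low demote_le[of x p] by simp
  qed
qed

lemma no_0010_0021_snocI:
  assumes A: "no_0010_0021 x"
    and new: "\<And>i j k. i < j \<Longrightarrow> j < k \<Longrightarrow> k < length x \<Longrightarrow> x ! i = x ! j \<Longrightarrow> x ! i \<le> b \<Longrightarrow> x ! k \<le> b"
  shows "no_0010_0021 (x @ [b])"
  unfolding no_0010_0021_def
proof (rule notI, elim exE conjE)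
  fix i j k l
  let ?z = "x @ [b]"
  assume ord: "i < j" "j < k" "k < l" "l < length ?z"
    and pat: "?z ! i = ?z ! j" "?z ! i \<le> ?z ! l" "?z ! l < ?z ! k"
  have ijk: "?z ! i = x ! i" "?z ! j = x ! j" "?z ! k = x ! k"
    using ord by (simp_all add: nth_append)
  consider "l < length x" | "l = length x"
    using ord by fastforce
  then show False
  proof cases
    case 1
    then show False
      using no_0010_0021D[OF A ord(1-3) 1] ord pat ijk by (simp add: nth_append)
  next
    case 2
    then show False
      using new[of i j k] ord pat ijk by simp
  qed
qed

lemma demote_snoc_eqI:
  assumes "a \<le> b"
    and reach: "a < b \<Longrightarrow> \<exists>i j k. i < j \<and> j < k \<and> k < length x \<and> x ! i = x ! j \<and> x ! i = a \<and> x ! k = b"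
    and bound: "\<And>i j k. i < j \<Longrightarrow> j < k \<Longrightarrow> k < length x \<Longrightarrow> x ! i = x ! j \<Longrightarrow> x ! k = b \<Longrightarrow> a \<le> x ! i"
  shows "demote (x @ [b]) (length x) = a"
proof (rule antisym)
  let ?z = "x @ [b]"
  show "demote ?z (length x) \<le> a"
  proof (cases "a < b")
    case True
    then obtain i j k where "i < j" "j < k" "k < length x" "x ! i = x ! j" "x ! i = a" "x ! k = b"
      using reach by blast
    then show ?thesis
      using demote_le_shadow[of i j k "length x" ?z] by (simp add: nth_append)
  next
    case False
    then show ?thesis
      using demote_le[of ?z "length x"] assms(1) by simp
  qed
  show "a \<le> demote ?z (length x)"
  proof (rule ccontr)
    assume "\<not> a \<le> demote ?z (length x)"
    then have "demote ?z (length x) < ?z ! length x"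
      using assms(1) by simp
    then obtain i j k where "i < j" "j < k" "k < length x" "?z ! i = ?z ! j"
      "?z ! k = ?z ! length x" "?z ! i = demote ?z (length x)"
      by (rule demote_witness)
    then show False
      using bound[of i j k] \<open>\<not> a \<le> demote ?z (length x)\<close> by (simp add: nth_append)
  qed
qed

text \<open>Position k lies above a repeat of a: the value a occurs twice before k and x_k > a.
  The last such position decides which entry to append for a prescribed demoted value a.\<close>

definition exceeds_repeat :: "nat list \<Rightarrow> nat \<Rightarrow> nat \<Rightarrow> bool" where
  "exceeds_repeat x a k \<longleftrightarrow>
     k < length x \<and> (\<exists>i j. i < j \<and> j < k \<and> x ! i = a \<and> x ! j = a) \<and> a < x ! k"

lemma extend_by_value:
  assumes A: "no_0010_0021 x" and B: "no_0011_0021 (demote_seq x @ [a])"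
    and none: "\<And>k. \<not> exceeds_repeat x a k"
  shows "no_0010_0021 (x @ [a])" "demote (x @ [a]) (length x) = a"
proof -
  note low = below_threshold[OF B]
  show "no_0010_0021 (x @ [a])"
  proof (rule no_0010_0021_snocI[OF A])
    fix i j k
    assume ijk: "i < j" "j < k" "k < length x" "x ! i = x ! j" "x ! i \<le> a"
    show "x ! k \<le> a"
    proof (cases "x ! i < a")
      case True
      then show ?thesis using low[OF ijk(3,1,2,4)] by simp
    next
      case False
      then show ?thesis using none[of k] ijk unfolding exceeds_repeat_def by force
    qed
  qed
  show "demote (x @ [a]) (length x) = a"
  proof (rule demote_snoc_eqI)
    fix i j k
    assume "i < j" "j < k" "k < length x" "x ! i = x ! j" "x ! k = a"
    then show "a \<le> x ! i" using low[of k i j] by fastforce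
  qed simp_all
qed

lemma extend_by_lifted_value:
  assumes A: "no_0010_0021 x" and B: "no_0011_0021 (demote_seq x @ [a])"
    and K: "exceeds_repeat x a K" and last: "\<And>k. exceeds_repeat x a k \<Longrightarrow> k \<le> K"
  shows "no_0010_0021 (x @ [x ! K])" "demote (x @ [x ! K]) (length x) = a"
proof -
  note low = below_threshold[OF B]
  obtain i0 j0 where ij0: "i0 < j0" "j0 < K" "x ! i0 = a" "x ! j0 = a"
    and K_len: "K < length x" and K_above: "a < x ! K"
    using K unfolding exceeds_repeat_def by blast
  show "no_0010_0021 (x @ [x ! K])"
  proof (rule no_0010_0021_snocI[OF A])
    fix i j k
    assume ijk: "i < j" "j < k" "k < length x" "x ! i = x ! j" "x ! i \<le> x ! K"
    show "x ! k \<le> x ! K"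
    proof (rule ccontr)
      assume above: "\<not> x ! k \<le> x ! K"
      consider "k < K" | "k = K" | "K < k" by linarith
      then show False
      proof cases
        case 1
        then show False using no_0010_0021D[OF A ijk(1,2) 1 K_len ijk(4,5)] above by simp
      next
        case 2
        then show False using above by simp
      next
        case 3
        then have "exceeds_repeat x a k"
          unfolding exceeds_repeat_def using ij0 K_above ijk(3) above
          by (intro conjI exI[of _ i0] exI[of _ j0]) auto
        then show False using last 3 by fastforce
      qed
    qed
  qed
  show "demote (x @ [x ! K]) (length x) = a"
  proof (rule demote_snoc_eqI)
    show "a \<le> x ! K" using K_above by simp
    show "\<exists>i j k. i < j \<and> j < k \<and> k < length x \<and> x ! i = x ! j \<and> x ! i = a \<and> x ! k = x ! K"
      using ij0 K_len by (intro exI[of _ i0] exI[of _ j0] exI[of _ K]) auto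
    fix i j k
    assume "i < j" "j < k" "k < length x" "x ! i = x ! j" "x ! k = x ! K"
    then show "a \<le> x ! i" using low[of k i j] K_above by fastforce
  qed
qed

lemma demote_seq_extend:
  assumes A: "no_0010_0021 x" and B: "no_0011_0021 (demote_seq x @ [a])"
  obtains b where "no_0010_0021 (x @ [b])" "demote (x @ [b]) (length x) = a"
proof (cases "\<exists>k. exceeds_repeat x a k")
  case False
  then show ?thesis
    using extend_by_value[OF A B] that by blast
next
  case True
  then obtain k0 where k0: "exceeds_repeat x a k0" by blast
  define K where "K = (GREATEST k. exceeds_repeat x a k)"
  have bounded: "\<And>k. exceeds_repeat x a k \<Longrightarrow> k \<le> length x"
    unfolding exceeds_repeat_def by simp
  have "exceeds_repeat x a K" and "\<And>k. exceeds_repeat x a k \<Longrightarrow> k \<le> K"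
    unfolding K_def using GreatestI_nat[of _ k0 "length x"] Greatest_le_nat[of _ _ "length x"] k0 bounded
    by blast+
  then show ?thesis
    using extend_by_lifted_value[OF A B] that by blast
qed

lemma demote_seq_surj: "no_0011_0021 y \<Longrightarrow> \<exists>x. no_0010_0021 x \<and> demote_seq x = y"
proof (induction y rule: rev_induct)
  case Nil
  have "no_0010_0021 []" "demote_seq [] = []"
    unfolding no_0010_0021_def demote_seq_def by simp_all
  then show ?case by blast
next
  case (snoc a y)
  obtain x where A: "no_0010_0021 x" and xy: "demote_seq x = y"
    using snoc.IH no_0011_0021_prefix[OF snoc.prems] by blast
  obtain b where "no_0010_0021 (x @ [b])" "demote (x @ [b]) (length x) = a"
    using demote_seq_extend[OF A] snoc.prems xy by blast
  moreover have "demote_seq (x @ [b]) = y @ [demote (x @ [b]) (length x)]"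
    using demote_seq_snoc xy by simp
  ultimately show ?case by auto
qed

lemma asc_demote_seq: "no_0010_0021 x \<Longrightarrow> asc (demote_seq x) = asc x"
  using asc_take_demote_seq[of x "length x"] by simp

text \<open>Demotion preserves being an ascent sequence in both directions: entries only
  decrease, and a demoted entry copies an earlier entry.\<close>

lemma ascent_seq_demote_seq:
  assumes A: "no_0010_0021 x" and S: "ascent_seq x"
  shows "ascent_seq (demote_seq x)"
  unfolding ascent_seq_def
proof (intro conjI allI impI)
  show "demote_seq x \<noteq> []" "demote_seq x ! 0 = 0"
    using S demote_0[of x] by (simp_all add: ascent_seq_def demote_seq_def)
  fix i assume i: "0 < i \<and> i < length (demote_seq x)"
  have "demote_seq x ! i \<le> x ! i"
    using i demote_le by simp
  also have "\<dots> \<le> asc (take i x) + 1"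
    using S i unfolding ascent_seq_def by simp
  finally show "demote_seq x ! i \<le> asc (take i (demote_seq x)) + 1"
    using asc_take_demote_seq[OF A] by simp
qed

lemma ascent_seq_of_demote_seq:
  assumes A: "no_0010_0021 x" and S: "ascent_seq (demote_seq x)"
  shows "ascent_seq x"
proof -
  have ne: "x \<noteq> []" and x0: "x ! 0 = 0"
    using S demote_0[of x] by (auto simp: ascent_seq_def demote_seq_def)
  have "x ! i \<le> asc (take i x) + 1" if "i < length x" for i
    using that
  proof (induction i rule: less_induct)
    case (less i)
    show ?case
    proof (cases "demote x i < x ! i")
      case True
      then obtain i' j' k where "k < i" and same: "x ! k = x ! i"
        by (rule demote_witness)
      then have "x ! k \<le> asc (take k x) + 1"
        using less.IH[of k] less.prems by simp
      also have "\<dots> \<le> asc (take i x) + 1"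
        using asc_take_mono \<open>k < i\<close> by simp
      finally show ?thesis using same by simp
    next
      case False
      then have fixed: "x ! i = demote_seq x ! i"
        using less.prems demote_le[of x i] by simp
      show ?thesis
      proof (cases "i = 0")
        case True
        then show ?thesis using x0 by simp
      next
        case False
        then have "demote_seq x ! i \<le> asc (take i (demote_seq x)) + 1"
          using S less.prems unfolding ascent_seq_def by simp
        then show ?thesis
          using fixed asc_take_demote_seq[OF A] by simp
      qed
    qed
  qed
  then show ?thesis
    unfolding ascent_seq_def using ne x0 by auto
qed

lemma demote_seq_bij:
  "bij_betw demote_seq
     {xs. ascent_seq xs \<and> length xs = n \<and> asc xs = m \<and> no_0010_0021 xs}
     {ys. ascent_seq ys \<and> length ys = n \<and> asc ys = m \<and> no_0011_0021 ys}"
proof (rule bij_betw_imageI)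
  show "inj_on demote_seq {xs. ascent_seq xs \<and> length xs = n \<and> asc xs = m \<and> no_0010_0021 xs}"
    by (rule inj_onI) (auto intro: demote_seq_inj)
  show "demote_seq ` {xs. ascent_seq xs \<and> length xs = n \<and> asc xs = m \<and> no_0010_0021 xs} =
      {ys. ascent_seq ys \<and> length ys = n \<and> asc ys = m \<and> no_0011_0021 ys}"
  proof (intro equalityI subsetI)
    fix y
    assume "y \<in> demote_seq ` {xs. ascent_seq xs \<and> length xs = n \<and> asc xs = m \<and> no_0010_0021 xs}"
    then show "y \<in> {ys. ascent_seq ys \<and> length ys = n \<and> asc ys = m \<and> no_0011_0021 ys}"
      using ascent_seq_demote_seq asc_demote_seq no_0011_0021_demote_seq by auto
  next
    fix y
    assume y: "y \<in> {ys. ascent_seq ys \<and> length ys = n \<and> asc ys = m \<and> no_0011_0021 ys}"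
    then obtain x where A: "no_0010_0021 x" and xy: "demote_seq x = y"
      using demote_seq_surj by blast
    then have "x \<in> {xs. ascent_seq xs \<and> length xs = n \<and> asc xs = m \<and> no_0010_0021 xs}"
      using y ascent_seq_of_demote_seq[OF A] asc_demote_seq[OF A] length_demote_seq[of x] by auto
    then show "y \<in> demote_seq ` {xs. ascent_seq xs \<and> length xs = n \<and> asc xs = m \<and> no_0010_0021 xs}"
      using xy by blast
  qed
qed

theorem proposition3:
  fixes n m :: nat
  assumes "1 \<le> n" and "m < n"
  shows "S n m {[0,0,1,0], [0,0,2,1]} = S n m {[0,0,1,1], [0,0,2,1]}"
proof -
  have "S n m {[0,0,1,0], [0,0,2,1]} =
      card {xs. ascent_seq xs \<and> length xs = n \<and> asc xs = m \<and> no_0010_0021 xs}"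
    by (simp only: S_def avoids_0010_0021_iff)
  also have "\<dots> = card {ys. ascent_seq ys \<and> length ys = n \<and> asc ys = m \<and> no_0011_0021 ys}"
    by (rule bij_betw_same_card[OF demote_seq_bij])
  also have "\<dots> = S n m {[0,0,1,1], [0,0,2,1]}"
    by (simp only: S_def avoids_0011_0021_iff)
  finally show ?thesis .
qed

end
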